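(* Let $n\ge 4$ and let $k$ be a positive integer. Then $|U(n,2)|=\frac12 C_{4k}^{2k}C_{4k^2}^{k}$ if $n=4k$; $|U(n,2)|=C_{4k+1}^{2k}C_{4k^2+2k}^{k}$ if $n=4k+1$; and $|U(n,2)|=0$ if $n$ is not of the form $4k$ or $4k+1$.
   Context: Let $S=K[x_1,\ldots,x_n]$ over a field $K$; $C_a^b$ is the binomial coefficient; $sm(S)_d$ is the set of square-free monomials of degree $d$. For a set $A$ of square-free monomials, $\sqcup(A)=\{gx_i\mid g\in A,\ x_i\nmid g\}$, $\sqcap(A)=\{h\ne1\mid h=g/x_i,\ g\in A,\ x_i\mid g\}$; $A\subseteq sm(S)_d$ is $(n,d)^{th}$ perfect if $\sqcup(A)=sm(S)_{d+1}$ and $\sqcap(A)=sm(S)_{d-1}$; $N_{(n,d)}$ is the least cardinality of an $(n,d)^{th}$ perfect set. With $\sigma$ the bijection from square-free monomials to subsets of $[n]$, the facet complex $\delta_{\mathcal{F}}(I)$ of a square-free monomial ideal $I$ has facets $\sigma(g)$, $g\in G(I)$ (the minimal generating set), the Stanley–Reisner complex is $\delta_{\mathcal{N}}(I)=\{\sigma(g)\mid g\notin I\}$, and $I$ is an $f$-ideal if both complexes have the same $f$-vector. An ideal is of degree $d$ if all elements of $G(I)$ have degree $d$. $U(n,2)$ is the set of $f$-ideals $I$ of $S$ of degree $2$ such that $G(I)$ contains an $(n,2)^{th}$ perfect set of cardinality $N_{(n,2)}$. *)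

theory Defs
  imports Complex_Main "HOL-Library.Multiset"
begin

text \<open>Monomials of S = K[x_1,...,x_n] are modelled as multisets of variable
indices (the multiset of variables x_i, with multiplicity the exponent).
Multiplication of monomials is multiset sum, divisibility is sub-multiset.
A monomial ideal of S is determined by the set of monomials it contains.\<close>

type_synonym monomial = "nat multiset"

definition monoms :: "nat \<Rightarrow> monomial set" where
  "monoms n = {m. set_mset m \<subseteq> {1..n}}"

definition sqfree :: "monomial \<Rightarrow> bool" where
  "sqfree m \<longleftrightarrow> (\<forall>x. count m x \<le> 1)"

definition sm :: "nat \<Rightarrow> nat \<Rightarrow> monomial set" where
  "sm n d = {m \<in> monoms n. sqfree m \<and> size m = d}"

definition monomial_ideal :: "nat \<Rightarrow> monomial set \<Rightarrow> bool" where
  "monomial_ideal n I \<longleftrightarrow> I \<subseteq> monoms n \<and>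
     (\<forall>m\<in>I. \<forall>m'\<in>monoms n. m + m' \<in> I)"

definition gens :: "monomial set \<Rightarrow> monomial set" where
  "gens I = {m \<in> I. \<forall>m'\<in>I. m' \<subseteq># m \<longrightarrow> m' = m}"

definition sqfree_monomial_ideal :: "nat \<Rightarrow> monomial set \<Rightarrow> bool" where
  "sqfree_monomial_ideal n I \<longleftrightarrow> monomial_ideal n I \<and> (\<forall>g\<in>gens I. sqfree g)"

definition ideal_of_degree :: "monomial set \<Rightarrow> nat \<Rightarrow> bool" where
  "ideal_of_degree I d \<longleftrightarrow> (\<forall>g\<in>gens I. size g = d)"

definition \<sigma> :: "monomial \<Rightarrow> nat set" where
  "\<sigma> m = set_mset m"

definition facet_complex :: "monomial set \<Rightarrow> nat set set" where
  "facet_complex I = {F. \<exists>g\<in>gens I. F \<subseteq> \<sigma> g}"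

definition SR_complex :: "nat \<Rightarrow> monomial set \<Rightarrow> nat set set" where
  "SR_complex n I = {\<sigma> g | g. g \<in> monoms n \<and> sqfree g \<and> g \<notin> I}"

text \<open>f-vector: entry i counts faces with i vertices (i.e. of dimension i-1).\<close>
definition fvec :: "nat set set \<Rightarrow> nat \<Rightarrow> nat" where
  "fvec \<Delta> i = card {F \<in> \<Delta>. card F = i}"

definition f_ideal :: "nat \<Rightarrow> monomial set \<Rightarrow> bool" where
  "f_ideal n I \<longleftrightarrow> sqfree_monomial_ideal n I \<and>
     fvec (facet_complex I) = fvec (SR_complex n I)"

definition up :: "nat \<Rightarrow> monomial set \<Rightarrow> monomial set" where
  "up n A = {g + {#i#} | g i. g \<in> A \<and> i \<in> {1..n} \<and> i \<notin># g}"

definition down :: "monomial set \<Rightarrow> monomial set" where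
  "down A = {g - {#i#} | g i. g \<in> A \<and> i \<in># g \<and> g - {#i#} \<noteq> {#}}"

definition perfect :: "nat \<Rightarrow> nat \<Rightarrow> monomial set \<Rightarrow> bool" where
  "perfect n d A \<longleftrightarrow> A \<subseteq> sm n d \<and> up n A = sm n (d + 1) \<and> down A = sm n (d - 1)"

definition N :: "nat \<Rightarrow> nat \<Rightarrow> nat" where
  "N n d = (LEAST c. \<exists>A. perfect n d A \<and> card A = c)"

definition U :: "nat \<Rightarrow> monomial set set" where
  "U n = {I. f_ideal n I \<and> ideal_of_degree I 2 \<and>
            (\<exists>A. A \<subseteq> gens I \<and> perfect n 2 A \<and> card A = N n 2)}"

end

theory Submission
  imports Defs
begin

text \<open>
  Square-free quadratic monomials are the edges of the complete graph on \<open>[n]\<close>. A set \<open>A\<close>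
  of them is \<open>(n,2)\<close>-perfect iff it covers every vertex and the complementary graph is
  triangle-free. By Mantel's theorem a triangle-free graph has at most \<open>\<lfloor>n\<^sup>2/4\<rfloor>\<close> edges, with
  equality only for the complete bipartite graphs with balanced sides, so the minimal perfect
  sets are exactly the edge sets inside the two halves of a balanced bipartition.

  If the generators \<open>E\<close> of a quadratic ideal contain a perfect set, its facet complex and its
  Stanley-Reisner complex both consist of all vertices and the empty face in dimensions below
  one and have no faces above it, while their edges are \<open>E\<close> and the complement of \<open>E\<close>. Hence
  such an ideal is an \<open>f\<close>-ideal iff \<open>E\<close> is half of all edges, which is impossible when
  \<open>C(n,2)\<close> is odd, i.e. when \<open>n \<equiv> 2, 3 (mod 4)\<close>. Otherwise \<open>E\<close> consists of the inner edges of
  a balanced bipartition and \<open>k\<close> of its \<open>\<lfloor>n\<^sup>2/4\<rfloor>\<close> cut edges; as \<open>k < n/2\<close>, the bipartition is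
  determined by \<open>E\<close>, and counting bipartitions times choices of \<open>k\<close> cut edges gives the formulas.
\<close>

abbreviation edge :: "nat \<Rightarrow> nat \<Rightarrow> monomial" where
  "edge a b \<equiv> {#a, b#}"

lemma edge_eq_iff: "edge a b = edge c d \<longleftrightarrow> (a = c \<and> b = d) \<or> (a = d \<and> b = c)"
  by (auto simp: add_eq_conv_ex)

lemma edge_commute: "edge a b = edge b a"
  by (rule add_mset_commute)

lemma mset_set_set_mset_sqfree: "sqfree m \<Longrightarrow> mset_set (set_mset m) = m"
proof (rule multiset_eqI)
  fix x assume "sqfree m"
  then have "count m x \<le> 1" by (simp add: sqfree_def)
  then show "count (mset_set (set_mset m)) x = count m x"
  proof (cases "x \<in># m")
    case True
    then have "count m x = 1" using \<open>count m x \<le> 1\<close> by (simp add: Suc_le_eq le_antisym)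
    with True show ?thesis by (simp add: count_mset_set')
  qed (simp add: count_mset_set' not_in_iff)
qed

lemma size_sqfree: "sqfree m \<Longrightarrow> size m = card (\<sigma> m)"
  unfolding \<sigma>_def by (metis mset_set_set_mset_sqfree size_mset_set)

lemma sqfree_mset_set: "sqfree (mset_set S)"
  unfolding sqfree_def by (simp add: count_mset_set')

lemma inj_on_\<sigma>_sm: "inj_on \<sigma> (sm n d)"
  unfolding inj_on_def sm_def \<sigma>_def by (metis mem_Collect_eq mset_set_set_mset_sqfree)

lemma finite_sm: "finite (sm n d)"
proof (rule finite_subset)
  show "sm n d \<subseteq> mset_set ` Pow {1..n}"
  proof
    fix m assume "m \<in> sm n d"
    then show "m \<in> mset_set ` Pow {1..n}"
      unfolding sm_def monoms_def
      by (intro image_eqI[of _ _ "set_mset m"]) (auto simp: mset_set_set_mset_sqfree)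
  qed
qed simp

lemma \<sigma>_image_sm: "\<sigma> ` sm n d = {S. S \<subseteq> {1..n} \<and> card S = d}"
proof
  show "\<sigma> ` sm n d \<subseteq> {S. S \<subseteq> {1..n} \<and> card S = d}"
    by (auto simp: sm_def monoms_def size_sqfree) (auto simp: \<sigma>_def)
  show "{S. S \<subseteq> {1..n} \<and> card S = d} \<subseteq> \<sigma> ` sm n d"
  proof
    fix S assume S: "S \<in> {S. S \<subseteq> {1..n} \<and> card S = d}"
    then have "finite S" by (auto dest: finite_subset)
    with S show "S \<in> \<sigma> ` sm n d"
      by (intro image_eqI[of _ _ "mset_set S"]) (auto simp: \<sigma>_def sm_def monoms_def sqfree_mset_set)
  qed
qed

lemma card_sm: "card (sm n d) = n choose d"
  using card_image[OF inj_on_\<sigma>_sm, of n d] n_subsets[of "{1..n}" d] by (simp add: \<sigma>_image_sm)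

lemma size_2_obtain_edge:
  assumes "size m = 2"
  obtains a b where "m = edge a b"
proof -
  obtain a m' where m: "m = add_mset a m'" using assms size_eq_Suc_imp_eq_union[of m 1] by auto
  with assms have "size m' = 1" by simp
  then obtain b where "m' = {#b#}" using size_1_singleton_mset by blast
  with m that show thesis by blast
qed

lemma mem_sm1_iff: "m \<in> sm n 1 \<longleftrightarrow> (\<exists>a\<in>{1..n}. m = {#a#})"
proof
  assume m: "m \<in> sm n 1"
  then obtain a where "m = {#a#}" unfolding sm_def using size_1_singleton_mset by blast
  with m show "\<exists>a\<in>{1..n}. m = {#a#}" by (auto simp: sm_def monoms_def)
qed (auto simp: sm_def monoms_def sqfree_def)

lemma mem_sm2_iff: "m \<in> sm n 2 \<longleftrightarrow> (\<exists>a\<in>{1..n}. \<exists>b\<in>{1..n}. a \<noteq> b \<and> m = edge a b)"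
proof
  assume m: "m \<in> sm n 2"
  then obtain a b where "m = edge a b"
    using size_2_obtain_edge unfolding sm_def by blast
  moreover from m this have "a \<in> {1..n}" "b \<in> {1..n}" "a \<noteq> b"
    by (auto simp: sm_def monoms_def sqfree_def split: if_splits)
  ultimately show "\<exists>a\<in>{1..n}. \<exists>b\<in>{1..n}. a \<noteq> b \<and> m = edge a b" by blast
qed (auto simp: sm_def monoms_def sqfree_def)

lemma edge_mem_sm2_iff: "edge a b \<in> sm n 2 \<longleftrightarrow> a \<in> {1..n} \<and> b \<in> {1..n} \<and> a \<noteq> b"
  unfolding mem_sm2_iff edge_eq_iff by blast

lemma triangle_mem_sm3_iff:
  "{#a, b, c#} \<in> sm n 3 \<longleftrightarrow> edge a b \<in> sm n 2 \<and> edge a c \<in> sm n 2 \<and> edge b c \<in> sm n 2"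
proof
  assume m: "{#a, b, c#} \<in> sm n 3"
  then have "count {#a, b, c#} a \<le> 1" "count {#a, b, c#} b \<le> 1" "count {#a, b, c#} c \<le> 1"
    unfolding sm_def sqfree_def by blast+
  moreover have "{a, b, c} \<subseteq> {1..n}" using m by (simp add: sm_def monoms_def)
  ultimately show "edge a b \<in> sm n 2 \<and> edge a c \<in> sm n 2 \<and> edge b c \<in> sm n 2"
    by (auto simp: edge_mem_sm2_iff split: if_splits)
next
  assume "edge a b \<in> sm n 2 \<and> edge a c \<in> sm n 2 \<and> edge b c \<in> sm n 2"
  then have "{a, b, c} \<subseteq> {1..n}" "a \<noteq> b" "a \<noteq> c" "b \<noteq> c" by (simp_all add: edge_mem_sm2_iff)
  then show "{#a, b, c#} \<in> sm n 3" by (auto simp: sm_def monoms_def sqfree_def)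
qed

lemma sm3_obtain_triangle:
  assumes "m \<in> sm n 3"
  obtains a b c where "m = {#a, b, c#}"
proof -
  from assms have size: "size m = Suc 2" by (simp add: sm_def)
  then obtain a m' where "m = add_mset a m'" using size_eq_Suc_imp_eq_union by blast
  moreover from this size have "size m' = 2" by simp
  ultimately show thesis using that size_2_obtain_edge by metis
qed

definition cut_edges :: "nat \<Rightarrow> nat set \<Rightarrow> monomial set" where
  "cut_edges n B = {edge a b | a b. a \<in> B \<and> b \<in> {1..n} - B}"

definition inner_edges :: "nat \<Rightarrow> nat set \<Rightarrow> monomial set" where
  "inner_edges n B = sm n 2 - cut_edges n B"

lemma cut_edges_sym:
  assumes "B \<subseteq> {1..n}"
  shows "cut_edges n B = {edge a b | a b. a \<in> {1..n} \<and> b \<in> {1..n} \<and> (a \<in> B \<longleftrightarrow> b \<notin> B)}"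
proof (intro equalityI subsetI)
  fix x assume "x \<in> cut_edges n B"
  then show "x \<in> {edge a b | a b. a \<in> {1..n} \<and> b \<in> {1..n} \<and> (a \<in> B \<longleftrightarrow> b \<notin> B)}"
    using assms unfolding cut_edges_def by blast
next
  fix x assume "x \<in> {edge a b | a b. a \<in> {1..n} \<and> b \<in> {1..n} \<and> (a \<in> B \<longleftrightarrow> b \<notin> B)}"
  then obtain a b where ab: "x = edge a b" "a \<in> {1..n}" "b \<in> {1..n}" "a \<in> B \<longleftrightarrow> b \<notin> B"
    by blast
  moreover have "x = edge b a" using ab(1) by (simp add: add_mset_commute)
  ultimately show "x \<in> cut_edges n B" unfolding cut_edges_def by blast
qed

lemma edge_mem_cut_edges_iff:
  assumes "B \<subseteq> {1..n}"
  shows "edge a b \<in> cut_edges n B \<longleftrightarrow> a \<in> {1..n} \<and> b \<in> {1..n} \<and> (a \<in> B \<longleftrightarrow> b \<notin> B)"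
  using assms by (auto simp: cut_edges_def edge_eq_iff)

lemma edge_mem_inner_edges_iff:
  assumes "B \<subseteq> {1..n}"
  shows "edge a b \<in> inner_edges n B \<longleftrightarrow> a \<in> {1..n} \<and> b \<in> {1..n} \<and> a \<noteq> b \<and> (a \<in> B \<longleftrightarrow> b \<in> B)"
  using assms by (auto simp: inner_edges_def edge_mem_sm2_iff edge_mem_cut_edges_iff)

lemma cut_edges_subset: "B \<subseteq> {1..n} \<Longrightarrow> cut_edges n B \<subseteq> sm n 2"
  by (auto simp: cut_edges_def edge_mem_sm2_iff)

lemma finite_cut_edges: "B \<subseteq> {1..n} \<Longrightarrow> finite (cut_edges n B)"
  using finite_subset[OF cut_edges_subset finite_sm] .

lemma cut_edges_compl: "B \<subseteq> {1..n} \<Longrightarrow> cut_edges n ({1..n} - B) = cut_edges n B"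
  by (simp add: cut_edges_sym) blast

lemma inner_edges_compl: "B \<subseteq> {1..n} \<Longrightarrow> inner_edges n ({1..n} - B) = inner_edges n B"
  unfolding inner_edges_def by (simp only: cut_edges_compl)

lemma card_cut_edges: "B \<subseteq> {1..n} \<Longrightarrow> card (cut_edges n B) = card B * (n - card B)"
proof -
  assume B: "B \<subseteq> {1..n}"
  then have "finite B" by (rule finite_subset) simp
  have "cut_edges n B = (\<lambda>(a, b). edge a b) ` (B \<times> ({1..n} - B))"
    unfolding cut_edges_def by force
  moreover have "inj_on (\<lambda>(a, b). edge a b) (B \<times> ({1..n} - B))"
    by (auto simp: inj_on_def edge_eq_iff)
  ultimately show ?thesis
    using B \<open>finite B\<close> by (simp add: card_image card_cartesian_product card_Diff_subset)
qed

lemma card_inner_edges: "B \<subseteq> {1..n} \<Longrightarrow> card (inner_edges n B) = card (sm n 2) - card B * (n - card B)"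
  by (simp add: inner_edges_def card_Diff_subset finite_cut_edges
      cut_edges_subset card_cut_edges)

definition triangle_free :: "monomial set \<Rightarrow> bool" where
  "triangle_free H \<longleftrightarrow> (\<forall>a b c. edge a b \<in> H \<longrightarrow> edge a c \<in> H \<longrightarrow> edge b c \<notin> H)"

lemma triangle_free_subset: "triangle_free H \<Longrightarrow> H' \<subseteq> H \<Longrightarrow> triangle_free H'"
  unfolding triangle_free_def by blast

lemma triangle_free_cut_edges: "B \<subseteq> {1..n} \<Longrightarrow> triangle_free (cut_edges n B)"
  unfolding triangle_free_def by (auto simp: edge_mem_cut_edges_iff)

lemma up_subset_sm: "A \<subseteq> sm n d \<Longrightarrow> up n A \<subseteq> sm n (d + 1)"
  unfolding up_def sm_def monoms_def sqfree_def by (fastforce simp: not_in_iff)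

lemma add_mem_up: "g \<in> A \<Longrightarrow> i \<in> {1..n} \<Longrightarrow> i \<notin># g \<Longrightarrow> g + {#i#} \<in> up n A"
  unfolding up_def by blast

lemma up_eq_sm3_iff:
  assumes A: "A \<subseteq> sm n 2"
  shows "up n A = sm n 3 \<longleftrightarrow> triangle_free (sm n 2 - A)"
proof
  assume up: "up n A = sm n 3"
  show "triangle_free (sm n 2 - A)"
    unfolding triangle_free_def
  proof (intro allI impI notI)
    fix a b c
    assume abc: "edge a b \<in> sm n 2 - A" "edge a c \<in> sm n 2 - A" "edge b c \<in> sm n 2 - A"
    then have "{#a, b, c#} \<in> up n A" unfolding up triangle_mem_sm3_iff by blast
    then obtain g i where g: "{#a, b, c#} = add_mset i g" "g \<in> A" unfolding up_def by auto
    then have "i \<in># {#a, b, c#}" "g = {#a, b, c#} - {#i#}" by simp_all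
    then have "g = edge b c \<or> g = edge a c \<or> g = edge a b" by (auto simp: add_mset_commute)
    then show False using g(2) abc by (elim disjE) simp_all
  qed
next
  assume tf: "triangle_free (sm n 2 - A)"
  show "up n A = sm n 3"
  proof
    show "up n A \<subseteq> sm n 3" using up_subset_sm[OF A] by simp
    show "sm n 3 \<subseteq> up n A"
    proof
      fix m assume "m \<in> sm n 3"
      moreover from this obtain a b c where m: "m = {#a, b, c#}" by (rule sm3_obtain_triangle)
      ultimately have abc: "edge a b \<in> sm n 2" "edge a c \<in> sm n 2" "edge b c \<in> sm n 2"
        by (simp_all add: triangle_mem_sm3_iff)
      have distinct: "a \<noteq> b" "a \<noteq> c" "b \<noteq> c" "{a, b, c} \<subseteq> {1..n}"
        using abc by (auto simp: edge_mem_sm2_iff)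
      from tf[unfolded triangle_free_def, rule_format, of a b c] abc
      consider "edge a b \<in> A" | "edge a c \<in> A" | "edge b c \<in> A" by auto
      then show "m \<in> up n A"
      proof cases
        case 1
        with distinct have "edge a b + {#c#} \<in> up n A" by (intro add_mem_up) auto
        then show ?thesis using m by (metis add_mset_commute add_mset_add_single)
      next
        case 2
        with distinct have "edge a c + {#b#} \<in> up n A" by (intro add_mem_up) auto
        then show ?thesis using m by (metis add_mset_commute add_mset_add_single)
      next
        case 3
        with distinct have "edge b c + {#a#} \<in> up n A" by (intro add_mem_up) auto
        then show ?thesis using m by (metis add_mset_add_single)
      qed
    qed
  qed
qed

lemma singleton_mem_sm1: "a \<in> {1..n} \<Longrightarrow> {#a#} \<in> sm n 1"
  by (simp add: sm_def monoms_def sqfree_def)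

lemma down_sm2: "A \<subseteq> sm n 2 \<Longrightarrow> down A = {{#b#} | a b. edge a b \<in> A}"
proof (intro equalityI subsetI)
  fix x assume A: "A \<subseteq> sm n 2" and "x \<in> down A"
  then obtain g i where g: "g \<in> A" "i \<in># g" "x = g - {#i#}" unfolding down_def by blast
  with A have "g \<in> sm n 2" by blast
  then obtain a b where "g = edge a b" unfolding mem_sm2_iff by blast
  moreover from this g(2) have "i = a \<or> i = b" by simp
  ultimately have "(x = {#b#} \<and> edge a b \<in> A) \<or> (x = {#a#} \<and> edge b a \<in> A)"
    using g by (auto simp: edge_commute[of b a])
  then show "x \<in> {{#b#} | a b. edge a b \<in> A}" by blast
next
  fix x assume "x \<in> {{#b#} | a b. edge a b \<in> A}"
  then obtain a b where "edge a b \<in> A" "x = edge a b - {#a#}" by auto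
  then show "x \<in> down A"
    unfolding down_def by (intro CollectI exI[of _ "edge a b"] exI[of _ a]) auto
qed

lemma down_eq_sm1_iff:
  assumes A: "A \<subseteq> sm n 2"
  shows "down A = sm n 1 \<longleftrightarrow> (\<forall>a\<in>{1..n}. \<exists>g\<in>A. a \<in># g)"
proof
  assume down: "down A = sm n 1"
  show "\<forall>a\<in>{1..n}. \<exists>g\<in>A. a \<in># g"
  proof
    fix a assume "a \<in> {1..n}"
    then have "{#a#} \<in> down A" unfolding down mem_sm1_iff by blast
    then obtain c where "edge c a \<in> A" unfolding down_sm2[OF A] by blast
    then show "\<exists>g\<in>A. a \<in># g" by (intro bexI) simp_all
  qed
next
  assume cover: "\<forall>a\<in>{1..n}. \<exists>g\<in>A. a \<in># g"
  show "down A = sm n 1"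
  proof (intro equalityI subsetI)
    fix x assume "x \<in> down A"
    then obtain a b where "edge a b \<in> A" "x = {#b#}" unfolding down_sm2[OF A] by blast
    moreover from this A have "edge a b \<in> sm n 2" by blast
    then have "b \<in> {1..n}" unfolding edge_mem_sm2_iff by blast
    ultimately show "x \<in> sm n 1" using singleton_mem_sm1 by metis
  next
    fix x assume "x \<in> sm n 1"
    then obtain a where a: "a \<in> {1..n}" "x = {#a#}" unfolding mem_sm1_iff by blast
    with cover obtain g where g: "g \<in> A" "a \<in># g" by blast
    with A have "g \<in> sm n 2" by blast
    then obtain c d where "g = edge c d" unfolding mem_sm2_iff by blast
    moreover from this g(2) have "a = c \<or> a = d" by simp
    ultimately have "edge d a \<in> A \<or> edge c a \<in> A"
      using g(1) by (metis edge_commute)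
    with a show "x \<in> down A" unfolding down_sm2[OF A] by blast
  qed
qed

lemma perfect_2_iff:
  "perfect n 2 A \<longleftrightarrow> A \<subseteq> sm n 2 \<and> triangle_free (sm n 2 - A) \<and> (\<forall>a\<in>{1..n}. \<exists>g\<in>A. a \<in># g)"
proof -
  have "(2::nat) + 1 = 3" "(2::nat) - 1 = 1" by simp_all
  then show ?thesis unfolding perfect_def using up_eq_sm3_iff down_eq_sm1_iff by metis
qed

lemma card_ge_2_obtain_other:
  assumes "finite S" "2 \<le> card S"
  obtains b where "b \<in> S" "b \<noteq> a"
proof -
  from assms obtain x y where "x \<in> S" "y \<in> S" "x \<noteq> y"
    using card_le_Suc0_iff_eq[of S] by fastforce
  then show thesis using that by (cases "x = a") auto
qed

lemma perfect_inner_edges: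
  assumes B: "B \<subseteq> {1..n}" and "2 \<le> card B" "2 \<le> card ({1..n} - B)"
  shows "perfect n 2 (inner_edges n B)"
  unfolding perfect_2_iff
proof (intro conjI ballI)
  show "inner_edges n B \<subseteq> sm n 2" by (simp add: inner_edges_def)
  have "sm n 2 - inner_edges n B = cut_edges n B"
    using cut_edges_subset[OF B] by (auto simp: inner_edges_def)
  then show "triangle_free (sm n 2 - inner_edges n B)" using triangle_free_cut_edges[OF B] by simp
  fix a assume a: "a \<in> {1..n}"
  have "finite B" using B by (rule finite_subset) simp
  obtain b where "b \<in> {1..n}" "b \<noteq> a" "a \<in> B \<longleftrightarrow> b \<in> B"
  proof (cases "a \<in> B")
    case True
    with card_ge_2_obtain_other[OF \<open>finite B\<close> \<open>2 \<le> card B\<close>] B that show ?thesis by blast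
  next
    case False
    with card_ge_2_obtain_other[OF _ \<open>2 \<le> card ({1..n} - B)\<close>] that show ?thesis by blast
  qed
  with a have "edge a b \<in> inner_edges n B" by (simp add: edge_mem_inner_edges_iff[OF B])
  then show "\<exists>g\<in>inner_edges n B. a \<in># g" by (intro bexI) simp_all
qed

lemma card_UN_less_sum:
  assumes "finite I" "\<forall>i\<in>I. finite (F i)" "x \<in> I" "y \<in> I" "x \<noteq> y" "e \<in> F x" "e \<in> F y"
  shows "card (\<Union>i\<in>I. F i) < (\<Sum>i\<in>I. card (F i))"
proof -
  have "(\<Union>i\<in>I. F i) = (\<Union>i\<in>I - {x}. F i) \<union> (F x - {e})"
    using assms by blast
  then have "card (\<Union>i\<in>I. F i) \<le> card (\<Union>i\<in>I - {x}. F i) + card (F x - {e})"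
    by (simp add: card_Un_le)
  also have "\<dots> \<le> (\<Sum>i\<in>I - {x}. card (F i)) + card (F x - {e})"
    using assms by (simp add: card_UN_le)
  also have "\<dots> < (\<Sum>i\<in>I - {x}. card (F i)) + card (F x)"
    using assms card_Diff1_less[of "F x" e] by simp
  also have "\<dots> = (\<Sum>i\<in>I. card (F i))"
    using assms by (simp add: sum.remove)
  finally show ?thesis .
qed

definition max_cut :: "nat \<Rightarrow> nat" where
  "max_cut n = n div 2 * (n - n div 2)"

lemma mult_diff_le_max_cut: "b * (n - b) \<le> max_cut n"
  and mult_diff_eq_max_cut: "b \<le> n \<Longrightarrow> b * (n - b) = max_cut n \<Longrightarrow> b = n div 2 \<or> b = n - n div 2"
proof -
  define m r where "m = n div 2" and "r = n mod 2"
  have n: "n = 2 * m + r" "r \<le> 1" unfolding m_def r_def by auto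
  have gap: "int (max_cut n) - int (b * (n - b)) = (int m - int b) * (int m - int b + int r)"
    if "b \<le> n" for b
  proof -
    have "int (b * (n - b)) = int b * (2 * int m + int r - int b)" using that n by (simp add: of_nat_diff)
    moreover have "int (max_cut n) = int m * (int m + int r)"
      using n unfolding max_cut_def m_def[symmetric] by simp
    ultimately show ?thesis by (simp add: algebra_simps)
  qed
  have nonneg: "(int m - int b) * (int m - int b + int r) \<ge> 0" for b
    using n(2) by (cases "int m - int b \<ge> 0") (simp_all add: mult_nonpos_nonpos)
  show "b * (n - b) \<le> max_cut n"
  proof (cases "b \<le> n")
    case True
    then have "int (b * (n - b)) \<le> int (max_cut n)" using gap[OF True] nonneg[of b] by linarith
    then show ?thesis by (simp only: of_nat_le_iff)
  qed simp
  assume le: "b \<le> n" and eq: "b * (n - b) = max_cut n"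
  have "(int m - int b) * (int m - int b + int r) = 0" using gap[OF le] unfolding eq by simp
  then show "b = n div 2 \<or> b = n - n div 2" using n unfolding m_def[symmetric] by auto
qed

lemma card_subset_UN_le:
  assumes W: "finite W" and F: "\<forall>u\<in>W. finite (F u) \<and> card (F u) \<le> D" and H: "H \<subseteq> (\<Union>u\<in>W. F u)"
  shows "card H \<le> card W * D"
    and "x \<in> W \<Longrightarrow> y \<in> W \<Longrightarrow> x \<noteq> y \<Longrightarrow> e \<in> F x \<Longrightarrow> e \<in> F y \<Longrightarrow> card H < card W * D"
proof -
  have "card H \<le> card (\<Union>u\<in>W. F u)" using W F H by (intro card_mono) auto
  moreover have "(\<Sum>u\<in>W. card (F u)) \<le> card W * D" using F sum_bounded_above[of W "\<lambda>u. card (F u)" D] by simp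
  ultimately show "card H \<le> card W * D" using card_UN_le[OF W, of F] by linarith
  assume "x \<in> W" "y \<in> W" "x \<noteq> y" "e \<in> F x" "e \<in> F y"
  then have "card (\<Union>u\<in>W. F u) < (\<Sum>u\<in>W. card (F u))"
    using W F card_UN_less_sum[of W F x y e] by blast
  with \<open>card H \<le> card (\<Union>u\<in>W. F u)\<close> \<open>(\<Sum>u\<in>W. card (F u)) \<le> card W * D\<close>
  show "card H < card W * D" by linarith
qed

definition neighbors :: "monomial set \<Rightarrow> nat \<Rightarrow> nat set" where
  "neighbors H u = {w. edge u w \<in> H}"

lemma neighbors_subset: "H \<subseteq> sm n 2 \<Longrightarrow> neighbors H u \<subseteq> {1..n}"
  unfolding neighbors_def using edge_mem_sm2_iff by blast

lemma triangle_free_neighbors: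
  "triangle_free H \<Longrightarrow> x \<in> neighbors H v \<Longrightarrow> y \<in> neighbors H v \<Longrightarrow> edge x y \<notin> H"
  unfolding triangle_free_def neighbors_def by blast

lemma obtain_max_on:
  fixes f :: "'a \<Rightarrow> 'b::linorder"
  assumes "finite S" "S \<noteq> {}"
  obtains v where "v \<in> S" "\<And>u. u \<in> S \<Longrightarrow> f u \<le> f v"
proof -
  have fin: "finite (f ` S)" and ne: "f ` S \<noteq> {}" using assms by auto
  obtain v where v: "v \<in> S" "f v = Max (f ` S)" using Max_in[OF fin ne] by auto
  show thesis
  proof (rule that[OF v(1)])
    fix u assume "u \<in> S"
    then show "f u \<le> f v" unfolding v(2) by (intro Max_ge fin imageI)
  qed
qed

lemma independent_obtain_edge:
  assumes H: "H \<subseteq> sm n 2" and indep: "\<And>x y. x \<in> B \<Longrightarrow> y \<in> B \<Longrightarrow> edge x y \<notin> H" and "e \<in> H"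
  obtains x y where "e = edge x y" "x \<in> {1..n} - B" "y \<in> neighbors H x" "x \<in> neighbors H y"
proof -
  from assms have "e \<in> sm n 2" by blast
  then obtain x y where xy: "e = edge x y" "x \<in> {1..n}" "y \<in> {1..n}" unfolding mem_sm2_iff by blast
  have "edge x y \<in> H" "edge y x \<in> H" using \<open>e \<in> H\<close> xy(1) edge_commute[of x y] by metis+
  then have nb: "y \<in> neighbors H x" "x \<in> neighbors H y" by (simp_all add: neighbors_def)
  show thesis
  proof (cases "x \<in> B")
    case False
    with that xy nb show thesis by blast
  next
    case True
    with indep \<open>edge x y \<in> H\<close> xy have "y \<in> {1..n} - B" by blast
    moreover have "e = edge y x" using xy(1) by (metis edge_commute)
    ultimately show thesis using that nb by blast
  qed
qed

text \<open>Counting the edges at the vertices outside \<open>B\<close> bounds them by \<open>(n - card B) * card B\<close>;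
  an edge with both ends outside \<open>B\<close> would be counted twice.\<close>

lemma card_le_if_independent:
  assumes H: "H \<subseteq> sm n 2" and B: "B \<subseteq> {1..n}"
    and indep: "\<And>x y. x \<in> B \<Longrightarrow> y \<in> B \<Longrightarrow> edge x y \<notin> H"
    and deg: "\<And>u. u \<in> {1..n} - B \<Longrightarrow> card (neighbors H u) \<le> card B"
  shows "card H \<le> card B * (n - card B)"
    and "card H = card B * (n - card B) \<Longrightarrow> H = cut_edges n B"
proof -
  define W where "W = {1..n} - B"
  have "finite B" using B by (rule finite_subset) simp
  then have card_W: "card W = n - card B" unfolding W_def using B by (simp add: card_Diff_subset)
  have F: "\<forall>u\<in>W. finite (edge u ` neighbors H u) \<and> card (edge u ` neighbors H u) \<le> card B"
  proof
    fix u assume "u \<in> W"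
    have "finite (neighbors H u)" using neighbors_subset[OF H] by (rule finite_subset) simp
    with deg[of u] \<open>u \<in> W\<close> card_image_le[of "neighbors H u" "edge u"]
    show "finite (edge u ` neighbors H u) \<and> card (edge u ` neighbors H u) \<le> card B"
      unfolding W_def by simp
  qed
  have cover: "H \<subseteq> (\<Union>u\<in>W. edge u ` neighbors H u)"
  proof
    fix e assume "e \<in> H"
    with H indep obtain x y where "e = edge x y" "x \<in> W" "y \<in> neighbors H x"
      unfolding W_def by (rule independent_obtain_edge)
    then show "e \<in> (\<Union>u\<in>W. edge u ` neighbors H u)" by blast
  qed
  show "card H \<le> card B * (n - card B)"
    using card_subset_UN_le(1)[OF _ F cover] card_W by (simp add: W_def mult.commute)
  assume eq: "card H = card B * (n - card B)"
  have sub: "H \<subseteq> cut_edges n B"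
  proof
    fix e assume "e \<in> H"
    with H indep obtain x y where e: "e = edge x y" "x \<in> W" "y \<in> neighbors H x" "x \<in> neighbors H y"
      unfolding W_def by (rule independent_obtain_edge)
    have "y \<notin> W"
    proof
      assume "y \<in> W"
      moreover have "edge x y \<in> sm n 2" using e(1) \<open>e \<in> H\<close> H by blast
      then have "x \<noteq> y" by (simp add: edge_mem_sm2_iff)
      moreover have "e \<in> edge x ` neighbors H x" "e \<in> edge y ` neighbors H y"
        using e edge_commute[of x y] by simp_all
      ultimately have "card H < card W * card B"
        using card_subset_UN_le(2)[OF _ F cover] e(2) by (simp add: W_def)
      with eq card_W show False by (simp add: mult.commute)
    qed
    moreover have "y \<in> {1..n}" using e(3) neighbors_subset[OF H] by blast
    ultimately show "e \<in> cut_edges n B"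
      using e(1,2) unfolding W_def by (simp add: edge_mem_cut_edges_iff[OF B])
  qed
  from card_subset_eq[OF finite_cut_edges[OF B] sub] show "H = cut_edges n B" by (simp add: eq card_cut_edges[OF B])
qed

text \<open>Mantel's argument: the neighbourhood of a vertex of maximum degree is independent.\<close>

lemma triangle_free_obtain_cut:
  assumes H: "H \<subseteq> sm n 2" and tf: "triangle_free H"
  obtains B where "B \<subseteq> {1..n}" "card H \<le> card B * (n - card B)"
    "card H = card B * (n - card B) \<Longrightarrow> H = cut_edges n B"
proof (cases "n = 0")
  case True
  with H have "H = {}" by (auto simp: sm_def monoms_def)
  with that[of "{}"] show thesis by (simp add: cut_edges_def)
next
  case False
  then obtain v
    where max: "\<And>u. u \<in> {1..n} \<Longrightarrow> card (neighbors H u) \<le> card (neighbors H v)"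
    using obtain_max_on[of "{1..n}" "\<lambda>u. card (neighbors H u)"] by auto
  have "neighbors H v \<subseteq> {1..n}" by (rule neighbors_subset[OF H])
  moreover have "edge x y \<notin> H" if "x \<in> neighbors H v" "y \<in> neighbors H v" for x y
    using triangle_free_neighbors[OF tf that] .
  ultimately show thesis
    using card_le_if_independent[OF H, of "neighbors H v"] max that by blast
qed

theorem mantel: "H \<subseteq> sm n 2 \<Longrightarrow> triangle_free H \<Longrightarrow> card H \<le> max_cut n"
  by (metis triangle_free_obtain_cut mult_diff_le_max_cut le_trans)

definition halves :: "nat \<Rightarrow> nat set set" where
  "halves n = {B. B \<subseteq> {1..n} \<and> card B = n div 2}"

lemma card_compl_half: "B \<in> halves n \<Longrightarrow> card ({1..n} - B) = n - n div 2"
proof -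
  assume "B \<in> halves n"
  then have "B \<subseteq> {1..n}" "card B = n div 2" by (simp_all add: halves_def)
  moreover from this(1) have "finite B" by (rule finite_subset) simp
  ultimately show ?thesis by (simp add: card_Diff_subset)
qed

theorem mantel_extremal:
  assumes H: "H \<subseteq> sm n 2" "triangle_free H" and eq: "card H = max_cut n"
  shows "\<exists>B\<in>halves n. H = cut_edges n B"
proof -
  obtain B where B: "B \<subseteq> {1..n}" "card H \<le> card B * (n - card B)"
    and cut: "card H = card B * (n - card B) \<Longrightarrow> H = cut_edges n B"
    using triangle_free_obtain_cut[OF H] by blast
  have "card B \<le> n" using card_mono[OF _ B(1)] by simp
  moreover have max: "card B * (n - card B) = max_cut n"
    using B(2) eq mult_diff_le_max_cut[of "card B" n] by simp
  ultimately consider "card B = n div 2" | "card B = n - n div 2"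
    using mult_diff_eq_max_cut by blast
  then show ?thesis
  proof cases
    case 1
    with B cut max eq show ?thesis unfolding halves_def by auto
  next
    case 2
    have "finite B" using B(1) by (rule finite_subset) simp
    with 2 B(1) have "card ({1..n} - B) = n div 2" by (simp add: card_Diff_subset)
    moreover have "H = cut_edges n ({1..n} - B)" using cut max eq cut_edges_compl[OF B(1)] by simp
    ultimately show ?thesis unfolding halves_def by auto
  qed
qed

lemma max_cut_le_card_sm2: "max_cut n \<le> card (sm n 2)"
proof -
  have B: "{1..n div 2} \<subseteq> {1..n}" by auto
  have "card (cut_edges n {1..n div 2}) \<le> card (sm n 2)"
    by (rule card_mono[OF finite_sm cut_edges_subset[OF B]])
  then show ?thesis using card_cut_edges[OF B] by (simp add: max_cut_def)
qed

lemma card_inner_edges_half: "B \<in> halves n \<Longrightarrow> card (inner_edges n B) = card (sm n 2) - max_cut n"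
  unfolding halves_def max_cut_def by (simp add: card_inner_edges)

lemma perfect_inner_edges_half: "4 \<le> n \<Longrightarrow> B \<in> halves n \<Longrightarrow> perfect n 2 (inner_edges n B)"
  using card_compl_half[of B n] by (intro perfect_inner_edges) (auto simp: halves_def)

lemma card_perfect_ge: "perfect n 2 A \<Longrightarrow> card (sm n 2) - max_cut n \<le> card A"
proof -
  assume "perfect n 2 A"
  then have A: "A \<subseteq> sm n 2" and "triangle_free (sm n 2 - A)" by (simp_all add: perfect_2_iff)
  then have "card (sm n 2 - A) \<le> max_cut n" by (intro mantel) auto
  then show ?thesis using A by (simp add: card_Diff_subset finite_subset[OF A finite_sm])
qed

lemma N_2_eq: "4 \<le> n \<Longrightarrow> N n 2 = card (sm n 2) - max_cut n"
  unfolding N_def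
proof (rule Least_equality)
  assume n: "4 \<le> n"
  have "{1..n div 2} \<in> halves n" by (simp add: halves_def)
  with n show "\<exists>A. perfect n 2 A \<and> card A = card (sm n 2) - max_cut n"
    using perfect_inner_edges_half card_inner_edges_half by blast
qed (use card_perfect_ge in blast)

lemma minimal_perfect_iff:
  assumes n: "4 \<le> n"
  shows "perfect n 2 A \<and> card A = N n 2 \<longleftrightarrow> (\<exists>B\<in>halves n. A = inner_edges n B)"
proof
  assume "perfect n 2 A \<and> card A = N n 2"
  then have A: "A \<subseteq> sm n 2" "triangle_free (sm n 2 - A)" and card: "card A = card (sm n 2) - max_cut n"
    by (simp_all add: perfect_2_iff N_2_eq[OF n])
  have "card (sm n 2 - A) = max_cut n"
    using card max_cut_le_card_sm2[of n] A(1) by (simp add: card_Diff_subset finite_subset[OF A(1) finite_sm])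
  then obtain B where "B \<in> halves n" "sm n 2 - A = cut_edges n B"
    using mantel_extremal[OF _ A(2)] by blast
  moreover from this A(1) have "A = inner_edges n B" by (auto simp: inner_edges_def)
  ultimately show "\<exists>B\<in>halves n. A = inner_edges n B" by blast
next
  assume "\<exists>B\<in>halves n. A = inner_edges n B"
  then obtain B where "B \<in> halves n" "A = inner_edges n B" by blast
  then show "perfect n 2 A \<and> card A = N n 2"
    using perfect_inner_edges_half[OF n] card_inner_edges_half N_2_eq[OF n] by simp
qed

definition ideal_gen :: "nat \<Rightarrow> monomial set \<Rightarrow> monomial set" where
  "ideal_gen n E = {m \<in> monoms n. \<exists>g\<in>E. g \<subseteq># m}"

lemma eq_if_subseteq_sm: "g \<in> sm n d \<Longrightarrow> g' \<in> sm n d \<Longrightarrow> g' \<subseteq># g \<Longrightarrow> g' = g"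
  unfolding sm_def by (metis (mono_tags, lifting) mem_Collect_eq mset_subset_size subset_mset.le_neq_trans
      less_irrefl_nat)

lemma gens_ideal_gen:
  assumes E: "E \<subseteq> sm n d"
  shows "gens (ideal_gen n E) = E"
proof (intro equalityI subsetI)
  fix m assume m: "m \<in> gens (ideal_gen n E)"
  then obtain g where g: "g \<in> E" "g \<subseteq># m" unfolding gens_def ideal_gen_def by blast
  with E have "g \<in> ideal_gen n E" unfolding ideal_gen_def sm_def by blast
  with m g show "m \<in> E" unfolding gens_def by blast
next
  fix g assume g: "g \<in> E"
  have "m' = g" if "m' \<in> ideal_gen n E" "m' \<subseteq># g" for m'
  proof -
    from that(1) obtain g' where "g' \<in> E" "g' \<subseteq># m'" unfolding ideal_gen_def by blast
    moreover from this(2) that(2) have "g' \<subseteq># g" by (rule subset_mset.order_trans)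
    ultimately have "g' = g" using eq_if_subseteq_sm[of g n d g'] g E by blast
    with \<open>g' \<subseteq># m'\<close> that(2) show "m' = g" by simp
  qed
  moreover from g E have "g \<in> ideal_gen n E" unfolding ideal_gen_def sm_def by blast
  ultimately show "g \<in> gens (ideal_gen n E)" unfolding gens_def by blast
qed

lemma ex_gens_subseteq: "m \<in> I \<Longrightarrow> \<exists>g\<in>gens I. g \<subseteq># m"
proof (induction "size m" arbitrary: m rule: less_induct)
  case less
  show ?case
  proof (cases "m \<in> gens I")
    case False
    with less.prems obtain m' where "m' \<in> I" "m' \<subseteq># m" "m' \<noteq> m" unfolding gens_def by blast
    then have m': "m' \<in> I" "m' \<subset># m" by (simp_all add: subset_mset.le_neq_trans)
    obtain g where "g \<in> gens I" "g \<subseteq># m'" using less.hyps[OF mset_subset_size[OF m'(2)] m'(1)] by blast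
    with m'(2) show ?thesis by (meson subset_mset.less_imp_le subset_mset.order_trans)
  qed auto
qed

lemma ideal_gen_gens: "monomial_ideal n I \<Longrightarrow> ideal_gen n (gens I) = I"
proof (intro equalityI subsetI)
  fix m assume I: "monomial_ideal n I" and "m \<in> ideal_gen n (gens I)"
  then obtain g where m: "m \<in> monoms n" "g \<in> I" "g \<subseteq># m" unfolding ideal_gen_def gens_def by blast
  have "m - g \<in> monoms n" using m(1) unfolding monoms_def by (auto dest: in_diffD)
  with I m show "m \<in> I" unfolding monomial_ideal_def by (metis subset_mset.add_diff_inverse)
qed (use ex_gens_subseteq in \<open>auto simp: ideal_gen_def monomial_ideal_def\<close>)

lemma sqfree_monomial_ideal_ideal_gen:
  assumes E: "E \<subseteq> sm n d"
  shows "sqfree_monomial_ideal n (ideal_gen n E)"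
proof -
  have "m + m' \<in> ideal_gen n E" if "m \<in> ideal_gen n E" "m' \<in> monoms n" for m m'
  proof -
    from that(1) obtain g where "m \<in> monoms n" "g \<in> E" "g \<subseteq># m" unfolding ideal_gen_def by blast
    moreover from this(3) have "g \<subseteq># m + m'" by (simp add: subset_mset.add_increasing2)
    ultimately show ?thesis using that(2) unfolding ideal_gen_def monoms_def by auto
  qed
  then have "monomial_ideal n (ideal_gen n E)"
    unfolding monomial_ideal_def by (auto simp: ideal_gen_def)
  with E show ?thesis by (auto simp: sqfree_monomial_ideal_def gens_ideal_gen sm_def)
qed

lemma ideal_of_degree_ideal_gen: "E \<subseteq> sm n d \<Longrightarrow> ideal_of_degree (ideal_gen n E) d"
  by (auto simp: ideal_of_degree_def gens_ideal_gen sm_def)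

lemma sqfree_subseteq: "sqfree m \<Longrightarrow> m' \<subseteq># m \<Longrightarrow> sqfree m'"
  unfolding sqfree_def by (meson mset_subset_eq_count order_trans)

lemma monoms_subseteq: "m \<in> monoms n \<Longrightarrow> m' \<subseteq># m \<Longrightarrow> m' \<in> monoms n"
  unfolding monoms_def using set_mset_mono by blast

lemma sqfree_obtain_triangle:
  assumes g: "sqfree g" "g \<in> monoms n" "3 \<le> size g"
  obtains a b c where "{#a, b, c#} \<in> sm n 3" "{#a, b, c#} \<subseteq># g"
proof -
  obtain a g1 where "g = add_mset a g1" using g(3) size_eq_Suc_imp_eq_union[of g "size g - 1"] by auto
  moreover obtain b g2 where "g1 = add_mset b g2"
    using g(3) calculation size_eq_Suc_imp_eq_union[of g1 "size g1 - 1"] by auto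
  moreover obtain c rest where "g2 = add_mset c rest"
    using g(3) calculation size_eq_Suc_imp_eq_union[of g2 "size g2 - 1"] by auto
  ultimately have "g = {#a, b, c#} + rest" by simp
  then have sub: "{#a, b, c#} \<subseteq># g" by simp
  moreover have "{#a, b, c#} \<in> sm n 3"
    using sqfree_subseteq[OF g(1) sub] monoms_subseteq[OF g(2) sub] by (simp add: sm_def)
  ultimately show thesis using that by blast
qed

lemma \<sigma>_sm2: "g \<in> sm n 2 \<Longrightarrow> \<sigma> g \<subseteq> {1..n} \<and> card (\<sigma> g) = 2"
  using \<sigma>_image_sm[of n 2] by blast

lemma size_ge_if_mem_ideal_gen: "E \<subseteq> sm n d \<Longrightarrow> m \<in> ideal_gen n E \<Longrightarrow> d \<le> size m"
  unfolding ideal_gen_def sm_def using size_mset_mono by fastforce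

lemma mem_ideal_gen_sm_iff: "E \<subseteq> sm n d \<Longrightarrow> g \<in> sm n d \<Longrightarrow> g \<in> ideal_gen n E \<longleftrightarrow> g \<in> E"
  unfolding ideal_gen_def using eq_if_subseteq_sm[of g n d] by (auto simp: sm_def)

lemma facet_complex_ideal_gen_card_2:
  assumes E: "E \<subseteq> sm n 2"
  shows "{S \<in> facet_complex (ideal_gen n E). card S = 2} = \<sigma> ` E"
proof (intro equalityI subsetI)
  fix S assume "S \<in> {S \<in> facet_complex (ideal_gen n E). card S = 2}"
  then obtain g where g: "g \<in> E" "S \<subseteq> \<sigma> g" "card S = 2"
    unfolding facet_complex_def gens_ideal_gen[OF E] by blast
  moreover have "finite (\<sigma> g)" "card (\<sigma> g) = 2" using \<sigma>_sm2 g(1) E by (auto simp: \<sigma>_def)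
  ultimately have "S = \<sigma> g" using card_subset_eq[of "\<sigma> g" S] by simp
  from this g(1) show "S \<in> \<sigma> ` E" by (rule image_eqI)
next
  fix S assume "S \<in> \<sigma> ` E"
  then obtain g where "g \<in> E" "S = \<sigma> g" by blast
  with E \<sigma>_sm2[of g n] show "S \<in> {S \<in> facet_complex (ideal_gen n E). card S = 2}"
    unfolding facet_complex_def gens_ideal_gen[OF E] by blast
qed

lemma facet_complex_ideal_gen_card_ne_2:
  assumes E: "E \<subseteq> sm n 2" and cover: "\<forall>a\<in>{1..n}. \<exists>g\<in>E. a \<in># g" and "E \<noteq> {}" and "i \<noteq> 2"
  shows "{S \<in> facet_complex (ideal_gen n E). card S = i} = {S. S \<subseteq> {1..n} \<and> card S = i \<and> i < 2}"
proof (intro equalityI subsetI)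
  fix S assume "S \<in> {S \<in> facet_complex (ideal_gen n E). card S = i}"
  then obtain g where g: "g \<in> E" "S \<subseteq> \<sigma> g" "card S = i"
    unfolding facet_complex_def gens_ideal_gen[OF E] by blast
  moreover have "finite (\<sigma> g)" "card (\<sigma> g) = 2" "\<sigma> g \<subseteq> {1..n}" using \<sigma>_sm2 g(1) E by (auto simp: \<sigma>_def)
  ultimately show "S \<in> {S. S \<subseteq> {1..n} \<and> card S = i \<and> i < 2}"
    using card_mono[of "\<sigma> g" S] \<open>i \<noteq> 2\<close> by auto
next
  fix S assume S: "S \<in> {S. S \<subseteq> {1..n} \<and> card S = i \<and> i < 2}"
  then have "finite S" by (auto dest: finite_subset)
  have "\<exists>g\<in>E. S \<subseteq> \<sigma> g"
  proof (cases "i = 0")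
    case True
    with S \<open>finite S\<close> \<open>E \<noteq> {}\<close> show ?thesis by auto
  next
    case False
    with S have "card S = 1" by simp
    then obtain a where "S = {a}" by (rule card_1_singletonE)
    with S cover show ?thesis by (auto simp: \<sigma>_def)
  qed
  with S show "S \<in> {S \<in> facet_complex (ideal_gen n E). card S = i}"
    unfolding facet_complex_def gens_ideal_gen[OF E] by blast
qed

lemma SR_complex_ideal_gen_card_2:
  assumes E: "E \<subseteq> sm n 2"
  shows "{S \<in> SR_complex n (ideal_gen n E). card S = 2} = \<sigma> ` (sm n 2 - E)"
proof (intro equalityI subsetI)
  fix S assume "S \<in> {S \<in> SR_complex n (ideal_gen n E). card S = 2}"
  then obtain g where g: "S = \<sigma> g" "g \<in> monoms n" "sqfree g" "g \<notin> ideal_gen n E" "card S = 2"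
    unfolding SR_complex_def by blast
  then have "g \<in> sm n 2" by (simp add: sm_def size_sqfree)
  moreover from this g(4) have "g \<notin> E" by (simp add: mem_ideal_gen_sm_iff[OF E])
  ultimately show "S \<in> \<sigma> ` (sm n 2 - E)" using g(1) by blast
next
  fix S assume "S \<in> \<sigma> ` (sm n 2 - E)"
  then obtain g where g: "S = \<sigma> g" "g \<in> sm n 2" "g \<notin> E" by blast
  then have "g \<notin> ideal_gen n E" "g \<in> monoms n" "sqfree g" "card (\<sigma> g) = 2"
    using mem_ideal_gen_sm_iff[OF E g(2)] \<sigma>_sm2[OF g(2)] by (simp_all add: sm_def)
  with g(1) show "S \<in> {S \<in> SR_complex n (ideal_gen n E). card S = 2}"
    unfolding SR_complex_def by blast
qed

text \<open>A square-free monomial of degree at least three outside the ideal would contain a triangle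
  with no edge in \<open>E\<close>.\<close>

lemma SR_complex_ideal_gen_card_ne_2:
  assumes E: "E \<subseteq> sm n 2" and tf: "triangle_free (sm n 2 - E)" and "i \<noteq> 2"
  shows "{S \<in> SR_complex n (ideal_gen n E). card S = i} = {S. S \<subseteq> {1..n} \<and> card S = i \<and> i < 2}"
proof (intro equalityI subsetI)
  fix S assume "S \<in> {S \<in> SR_complex n (ideal_gen n E). card S = i}"
  then obtain g where g: "S = \<sigma> g" "g \<in> monoms n" "sqfree g" "g \<notin> ideal_gen n E" "card S = i"
    unfolding SR_complex_def by blast
  have "\<not> 3 \<le> size g"
  proof
    assume "3 \<le> size g"
    with g(3,2) obtain a b c where abc: "{#a, b, c#} \<in> sm n 3" "{#a, b, c#} \<subseteq># g"
      by (rule sqfree_obtain_triangle)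
    then have edges: "edge a b \<in> sm n 2" "edge a c \<in> sm n 2" "edge b c \<in> sm n 2"
      by (simp_all add: triangle_mem_sm3_iff)
    have "edge a b \<subseteq># {#a, b, c#}" "edge a c \<subseteq># {#a, b, c#}" "edge b c \<subseteq># {#a, b, c#}"
      by (simp_all add: subseteq_mset_def)
    then have "edge a b \<subseteq># g" "edge a c \<subseteq># g" "edge b c \<subseteq># g"
      using abc(2) subset_mset.order_trans by blast+
    with g(2,4) have "edge a b \<notin> E" "edge a c \<notin> E" "edge b c \<notin> E" unfolding ideal_gen_def by blast+
    with edges tf show False unfolding triangle_free_def by blast
  qed
  with g \<open>i \<noteq> 2\<close> show "S \<in> {S. S \<subseteq> {1..n} \<and> card S = i \<and> i < 2}"
    by (auto simp: size_sqfree monoms_def \<sigma>_def)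
next
  fix S assume S: "S \<in> {S. S \<subseteq> {1..n} \<and> card S = i \<and> i < 2}"
  then have "finite S" by (auto dest: finite_subset)
  with S have "\<sigma> (mset_set S) = S" "mset_set S \<in> monoms n" "size (mset_set S) < 2"
    by (auto simp: \<sigma>_def monoms_def)
  moreover have "mset_set S \<notin> ideal_gen n E"
    using size_ge_if_mem_ideal_gen[OF E] \<open>size (mset_set S) < 2\<close> by fastforce
  ultimately show "S \<in> {S \<in> SR_complex n (ideal_gen n E). card S = i}"
    using S sqfree_mset_set unfolding SR_complex_def by blast
qed

theorem f_ideal_ideal_gen_iff:
  assumes E: "E \<subseteq> sm n 2" and cover: "\<forall>a\<in>{1..n}. \<exists>g\<in>E. a \<in># g" and "E \<noteq> {}"
    and tf: "triangle_free (sm n 2 - E)"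
  shows "f_ideal n (ideal_gen n E) \<longleftrightarrow> card E = card (sm n 2 - E)"
proof -
  let ?F = "facet_complex (ideal_gen n E)" and ?SR = "SR_complex n (ideal_gen n E)"
  have ne_2: "fvec ?F i = fvec ?SR i" if "i \<noteq> 2" for i
    using facet_complex_ideal_gen_card_ne_2[OF E cover \<open>E \<noteq> {}\<close> that]
      SR_complex_ideal_gen_card_ne_2[OF E tf that] by (simp add: fvec_def)
  have F2: "fvec ?F 2 = card E"
    using facet_complex_ideal_gen_card_2[OF E] card_image[OF inj_on_subset[OF inj_on_\<sigma>_sm E]]
    by (simp add: fvec_def)
  have SR2: "fvec ?SR 2 = card (sm n 2 - E)"
    using SR_complex_ideal_gen_card_2[OF E] card_image[OF inj_on_subset[OF inj_on_\<sigma>_sm Diff_subset]]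
    by (simp add: fvec_def)
  have "fvec ?F = fvec ?SR \<longleftrightarrow> card E = card (sm n 2 - E)"
  proof
    assume "fvec ?F = fvec ?SR"
    then have "fvec ?F 2 = fvec ?SR 2" by simp
    with F2 SR2 show "card E = card (sm n 2 - E)" by simp
  next
    assume "card E = card (sm n 2 - E)"
    show "fvec ?F = fvec ?SR"
    proof
      fix i show "fvec ?F i = fvec ?SR i"
        using ne_2 F2 SR2 \<open>card E = card (sm n 2 - E)\<close> by (cases "i = 2") simp_all
    qed
  qed
  with sqfree_monomial_ideal_ideal_gen[OF E] show ?thesis by (simp add: f_ideal_def)
qed

corollary f_ideal_ideal_gen_perfect_iff:
  assumes E: "E \<subseteq> sm n 2" and A: "A \<subseteq> E" "perfect n 2 A" and n: "0 < n"
  shows "f_ideal n (ideal_gen n E) \<longleftrightarrow> card E = card (sm n 2 - E)"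
proof (rule f_ideal_ideal_gen_iff[OF E])
  from A show cover: "\<forall>a\<in>{1..n}. \<exists>g\<in>E. a \<in># g" unfolding perfect_2_iff by blast
  with n show "E \<noteq> {}" by fastforce
  from A show "triangle_free (sm n 2 - E)"
    by (auto simp: perfect_2_iff elim: triangle_free_subset)
qed

definition U_generators :: "nat \<Rightarrow> monomial set set" where
  "U_generators n = {E. E \<subseteq> sm n 2 \<and> card E = card (sm n 2 - E) \<and> (\<exists>B\<in>halves n. inner_edges n B \<subseteq> E)}"

lemma gens_subset_sm2: "sqfree_monomial_ideal n I \<Longrightarrow> ideal_of_degree I 2 \<Longrightarrow> gens I \<subseteq> sm n 2"
  unfolding sqfree_monomial_ideal_def monomial_ideal_def ideal_of_degree_def gens_def sm_def by blast

theorem bij_betw_gens_U: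
  assumes n: "4 \<le> n"
  shows "bij_betw gens (U n) (U_generators n)"
proof (rule bij_betw_imageI)
  have ideal: "ideal_gen n (gens I) = I" if "I \<in> U n" for I
    using that ideal_gen_gens by (auto simp: U_def f_ideal_def sqfree_monomial_ideal_def)
  then show "inj_on gens (U n)" by (metis inj_onI)
  show "gens ` U n = U_generators n"
  proof (intro equalityI subsetI)
    fix E assume "E \<in> gens ` U n"
    then obtain I where I: "I \<in> U n" "E = gens I" by blast
    then have E: "E \<subseteq> sm n 2"
      using gens_subset_sm2[of n I] by (simp add: U_def f_ideal_def)
    from I obtain A where A: "A \<subseteq> E" "perfect n 2 A" "card A = N n 2" unfolding U_def by blast
    then obtain B where "B \<in> halves n" "A = inner_edges n B" using minimal_perfect_iff[OF n] by blast
    moreover have "f_ideal n (ideal_gen n E)" using I ideal by (simp add: U_def)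
    then have "card E = card (sm n 2 - E)" using f_ideal_ideal_gen_perfect_iff[OF E A(1,2)] n by simp
    ultimately show "E \<in> U_generators n" using E A(1) unfolding U_generators_def by blast
  next
    fix E assume "E \<in> U_generators n"
    then obtain B where E: "E \<subseteq> sm n 2" "card E = card (sm n 2 - E)"
      and B: "B \<in> halves n" "inner_edges n B \<subseteq> E" unfolding U_generators_def by blast
    have A: "perfect n 2 (inner_edges n B)" "card (inner_edges n B) = N n 2"
      using minimal_perfect_iff[OF n] B(1) by blast+
    have "ideal_gen n E \<in> U n"
      unfolding U_def using f_ideal_ideal_gen_perfect_iff[OF E(1) B(2) A(1)] n E(2) A B(2)
        ideal_of_degree_ideal_gen[OF E(1)] gens_ideal_gen[OF E(1)] by auto
    then show "E \<in> gens ` U n" using gens_ideal_gen[OF E(1)] by force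
  qed
qed

text \<open>If \<open>B'\<close> misses \<open>B\<close>, some \<open>w \<notin> B \<union> B'\<close> is joined to all of \<open>B\<close>; otherwise pick
  \<open>z \<in> B \<inter> B'\<close> and \<open>x \<in> B - B'\<close>, and join each vertex outside \<open>B\<close> to \<open>z\<close> or \<open>x\<close>
  according to its side of \<open>B'\<close>.\<close>

lemma card_le_inner_edges_Int_cut_edges:
  assumes B: "B \<subseteq> {1..n}" and B': "B' \<subseteq> {1..n}" and card: "card B' = card B" "card B \<le> n - card B"
    and ne: "B' \<noteq> B" "B' \<noteq> {1..n} - B"
  shows "card B \<le> card (inner_edges n B' \<inter> cut_edges n B)"
proof -
  have fin: "finite B" "finite B'" "finite (inner_edges n B' \<inter> cut_edges n B)"
    using B B' finite_cut_edges[OF B] by (auto intro: finite_subset)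
  have mem: "edge a b \<in> inner_edges n B' \<inter> cut_edges n B"
    if "a \<in> B" "b \<in> {1..n} - B" "a \<in> B' \<longleftrightarrow> b \<in> B'" for a b
    using that B by (auto simp: edge_mem_inner_edges_iff[OF B'] edge_mem_cut_edges_iff[OF B])
  show ?thesis
  proof (cases "B \<inter> B' = {}")
    case True
    with B' ne(2) obtain w where w: "w \<in> {1..n} - B" "w \<notin> B'" by blast
    have "inj_on (\<lambda>a. edge a w) B" by (auto simp: inj_on_def edge_eq_iff)
    moreover have "(\<lambda>a. edge a w) ` B \<subseteq> inner_edges n B' \<inter> cut_edges n B"
      using True w mem by blast
    ultimately show ?thesis using card_inj_on_le fin(3) by blast
  next
    case False
    then obtain z where z: "z \<in> B" "z \<in> B'" by blast
    have "\<not> B \<subseteq> B'" using card_subset_eq[OF fin(2)] card ne(1) by metis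
    then obtain x where x: "x \<in> B" "x \<notin> B'" by blast
    define f where "f b = (if b \<in> B' then edge z b else edge x b)" for b
    have "inj_on f ({1..n} - B)"
      using x z unfolding f_def by (auto simp: inj_on_def edge_eq_iff split: if_splits)
    moreover have "f ` ({1..n} - B) \<subseteq> inner_edges n B' \<inter> cut_edges n B"
      using x z mem unfolding f_def by auto
    ultimately have "card ({1..n} - B) \<le> card (inner_edges n B' \<inter> cut_edges n B)"
      using card_inj_on_le fin(3) by blast
    with card fin(1) B show ?thesis by (simp add: card_Diff_subset)
  qed
qed

lemma inner_edges_Un_cut_edges: "B \<subseteq> {1..n} \<Longrightarrow> X \<subseteq> cut_edges n B \<Longrightarrow> (inner_edges n B \<union> X) \<inter> cut_edges n B = X"
  by (auto simp: inner_edges_def)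

lemma inj_on_inner_edges_Un:
  assumes k: "k < n div 2" and BB: "BB \<subseteq> halves n" and sep: "\<And>B. B \<in> BB \<Longrightarrow> {1..n} - B \<notin> BB"
  shows "inj_on (\<lambda>(B, X). inner_edges n B \<union> X) (SIGMA B:BB. {X. X \<subseteq> cut_edges n B \<and> card X = k})"
proof (rule inj_onI)
  fix p p' assume "p \<in> (SIGMA B:BB. {X. X \<subseteq> cut_edges n B \<and> card X = k})"
    "p' \<in> (SIGMA B:BB. {X. X \<subseteq> cut_edges n B \<and> card X = k})"
    "(\<lambda>(B, X). inner_edges n B \<union> X) p = (\<lambda>(B, X). inner_edges n B \<union> X) p'"
  then obtain B X B' X' where p: "p = (B, X)" "p' = (B', X')"
    and B: "B \<in> BB" "X \<subseteq> cut_edges n B" "card X = k" and B': "B' \<in> BB" "X' \<subseteq> cut_edges n B'" "card X' = k"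
    and eq: "inner_edges n B \<union> X = inner_edges n B' \<union> X'" by auto
  have half: "B \<subseteq> {1..n}" "card B = n div 2" "B' \<subseteq> {1..n}" "card B' = n div 2"
    using B(1) B'(1) BB by (auto simp: halves_def)
  have X: "X = (inner_edges n B' \<union> X') \<inter> cut_edges n B"
    using inner_edges_Un_cut_edges[OF half(1) B(2)] eq by simp
  have "B' = B"
  proof (rule ccontr)
    assume "B' \<noteq> B"
    moreover have "B' \<noteq> {1..n} - B" using sep B(1) B'(1) by blast
    ultimately have "card B \<le> card (inner_edges n B' \<inter> cut_edges n B)"
      using half by (intro card_le_inner_edges_Int_cut_edges) simp_all
    also have "\<dots> \<le> card X"
      unfolding X by (intro card_mono finite_Int) (auto simp: finite_cut_edges[OF half(1)])
    finally show False using B(3) k half(2) by simp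
  qed
  with X inner_edges_Un_cut_edges[OF half(3) B'(2)] show "p = p'" by (simp add: p)
qed

lemma card_cut_edges_half: "B \<in> halves n \<Longrightarrow> card (cut_edges n B) = max_cut n"
  by (simp add: halves_def card_cut_edges max_cut_def)

lemma card_inner_edges_Un:
  assumes B: "B \<in> halves n" and X: "X \<subseteq> cut_edges n B"
  shows "card (inner_edges n B \<union> X) = card (sm n 2) - max_cut n + card X"
proof -
  have "B \<subseteq> {1..n}" using B by (simp add: halves_def)
  then have "finite (inner_edges n B)" "finite X" "inner_edges n B \<inter> X = {}"
    using X finite_subset[OF X finite_cut_edges] by (auto simp: inner_edges_def intro: finite_subset[OF _ finite_sm])
  then show ?thesis by (simp add: card_Un_disjoint card_inner_edges_half[OF B])
qed

lemma image_inner_edges_Un: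
  assumes C: "card (sm n 2) = 2 * (card (sm n 2) - max_cut n + k)"
    and BB: "BB \<subseteq> halves n" and cov: "\<And>B. B \<in> halves n \<Longrightarrow> B \<in> BB \<or> {1..n} - B \<in> BB"
  shows "(\<lambda>(B, X). inner_edges n B \<union> X) ` (SIGMA B:BB. {X. X \<subseteq> cut_edges n B \<and> card X = k})
    = U_generators n"
proof (intro equalityI subsetI)
  fix E assume "E \<in> (\<lambda>(B, X). inner_edges n B \<union> X) ` (SIGMA B:BB. {X. X \<subseteq> cut_edges n B \<and> card X = k})"
  then obtain B X where B: "B \<in> BB" "X \<subseteq> cut_edges n B" "card X = k" and E: "E = inner_edges n B \<union> X"
    by auto
  have half: "B \<in> halves n" "B \<subseteq> {1..n}" using B(1) BB by (auto simp: halves_def)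
  have sub: "E \<subseteq> sm n 2" using E B(2) cut_edges_subset[OF half(2)] by (auto simp: inner_edges_def)
  have "card E = card (sm n 2) - max_cut n + k" using card_inner_edges_Un[OF half(1) B(2)] B(3) E by simp
  moreover have "card (sm n 2 - E) = card (sm n 2) - card E"
    using sub by (simp add: card_Diff_subset finite_subset[OF _ finite_sm])
  ultimately have "card E = card (sm n 2 - E)" using C by simp
  with sub half(1) E show "E \<in> U_generators n" unfolding U_generators_def by blast
next
  fix E assume "E \<in> U_generators n"
  then obtain B0 where E: "E \<subseteq> sm n 2" "card E = card (sm n 2 - E)"
    and B0: "B0 \<in> halves n" "inner_edges n B0 \<subseteq> E" unfolding U_generators_def by blast
  obtain B where B: "B \<in> BB" "inner_edges n B \<subseteq> E"
  proof (cases "B0 \<in> BB")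
    case False
    with cov B0 have "{1..n} - B0 \<in> BB" by blast
    with B0 that show thesis using inner_edges_compl[of B0 n] by (auto simp: halves_def)
  qed (use B0 that in blast)
  have half: "B \<in> halves n" "B \<subseteq> {1..n}" using B(1) BB by (auto simp: halves_def)
  define X where "X = E \<inter> cut_edges n B"
  have X: "X \<subseteq> cut_edges n B" and EX: "E = inner_edges n B \<union> X"
    using E(1) B(2) unfolding X_def inner_edges_def by auto
  have "card (sm n 2 - E) = card (sm n 2) - card E"
    using E(1) by (simp add: card_Diff_subset finite_subset[OF _ finite_sm])
  with E(2) C card_inner_edges_Un[OF half(1) X] EX have "card X = k" by simp
  with B(1) X EX show "E \<in> (\<lambda>(B, X). inner_edges n B \<union> X) ` (SIGMA B:BB. {X. X \<subseteq> cut_edges n B \<and> card X = k})"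
    by blast
qed

theorem card_U_generators:
  assumes C: "card (sm n 2) = 2 * (card (sm n 2) - max_cut n + k)" and k: "k < n div 2"
    and BB: "BB \<subseteq> halves n" and cov: "\<And>B. B \<in> halves n \<Longrightarrow> B \<in> BB \<or> {1..n} - B \<in> BB"
    and sep: "\<And>B. B \<in> BB \<Longrightarrow> {1..n} - B \<notin> BB"
  shows "card (U_generators n) = card BB * (max_cut n choose k)"
proof -
  have fin: "finite BB" using BB finite_subset[of BB "Pow {1..n}"] by (auto simp: halves_def)
  have cut: "B \<in> BB \<Longrightarrow> finite (cut_edges n B) \<and> card (cut_edges n B) = max_cut n" for B
    using BB finite_cut_edges card_cut_edges_half by (auto simp: halves_def)
  have "card (U_generators n) = card (SIGMA B:BB. {X. X \<subseteq> cut_edges n B \<and> card X = k})"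
    using card_image[OF inj_on_inner_edges_Un[OF k BB sep]] image_inner_edges_Un[OF C BB cov] by simp
  also have "\<dots> = (\<Sum>B\<in>BB. card {X. X \<subseteq> cut_edges n B \<and> card X = k})"
    using fin cut by (intro card_SigmaI) auto
  also have "\<dots> = (\<Sum>B\<in>BB. max_cut n choose k)"
  proof (rule sum.cong)
    fix B assume "B \<in> BB"
    with cut show "card {X. X \<subseteq> cut_edges n B \<and> card X = k} = max_cut n choose k"
      using n_subsets[of "cut_edges n B" k] by simp
  qed simp
  finally show ?thesis by simp
qed

lemma card_halves: "card (halves n) = n choose (n div 2)"
  unfolding halves_def using n_subsets[of "{1..n}" "n div 2"] by simp

lemma card_halves_containing:
  assumes "even n" "a \<in> {1..n}"
  shows "2 * card {B \<in> halves n. a \<in> B} = n choose (n div 2)"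
proof -
  let ?P = "{B \<in> halves n. a \<in> B}" and ?Q = "{B \<in> halves n. a \<notin> B}"
  have compl: "{1..n} - B \<in> halves n" if "B \<in> halves n" for B
    using card_compl_half[OF that] that \<open>even n\<close> by (auto simp: halves_def)
  have "(\<lambda>B. {1..n} - B) ` ?P = ?Q"
  proof (intro equalityI subsetI)
    fix B assume "B \<in> (\<lambda>B. {1..n} - B) ` ?P"
    then obtain B' where "B' \<in> ?P" "B = {1..n} - B'" by blast
    with compl show "B \<in> ?Q" by blast
  next
    fix B assume B: "B \<in> ?Q"
    then have "B = {1..n} - ({1..n} - B)" by (auto simp: halves_def)
    moreover from B compl \<open>a \<in> {1..n}\<close> have "{1..n} - B \<in> ?P" by blast
    ultimately show "B \<in> (\<lambda>B. {1..n} - B) ` ?P" by blast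
  qed
  moreover have "inj_on (\<lambda>B. {1..n} - B) ?P" by (rule inj_onI) (auto simp: halves_def)
  ultimately have "card ?Q = card ?P" using card_image by fastforce
  moreover have "finite (halves n)" unfolding halves_def by (rule finite_subset[of _ "Pow {1..n}"]) auto
  then have "card (?P \<union> ?Q) = card ?P + card ?Q" by (intro card_Un_disjoint) auto
  moreover have "?P \<union> ?Q = halves n" by blast
  ultimately show ?thesis using card_halves[of n] by simp
qed

lemma card_U_mult_4:
  assumes "0 < k"
  shows "2 * card (U (4 * k)) = ((4 * k) choose (2 * k)) * ((4 * k ^ 2) choose k)"
proof -
  define n where "n = 4 * k"
  define BB where "BB = {B \<in> halves n. 1 \<in> B}"
  have n: "4 \<le> n" "even n" "n div 2 = 2 * k" "1 \<in> {1..n}" using assms by (auto simp: n_def)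
  have "card (sm n 2) = 2 * (card (sm n 2) - max_cut n + k)"
  proof -
    have "card (sm n 2) = 8 * (k * k) - 2 * k"
      unfolding card_sm choose_two n_def by (simp add: algebra_simps diff_mult_distrib2)
    moreover have "max_cut n = 4 * (k * k)" by (simp add: max_cut_def n_def)
    moreover have "k \<le> k * k" using assms by simp
    ultimately show ?thesis by simp
  qed
  moreover have "B \<in> halves n \<Longrightarrow> B \<in> BB \<or> {1..n} - B \<in> BB" for B
    using n card_compl_half[of B n] by (auto simp: BB_def halves_def)
  ultimately have "card (U_generators n) = card BB * (max_cut n choose k)"
    using assms n by (intro card_U_generators) (auto simp: BB_def)
  moreover have "2 * card BB = n choose (2 * k)" using card_halves_containing[OF n(2,4)] n(3) by (simp add: BB_def)
  moreover have "max_cut n = 4 * k ^ 2" by (simp add: max_cut_def n_def power2_eq_square)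
  ultimately show ?thesis
    using bij_betw_same_card[OF bij_betw_gens_U[OF n(1)]] by (simp add: n_def)
qed

lemma card_U_mult_4_plus_1:
  assumes "0 < k"
  shows "card (U (4 * k + 1)) = ((4 * k + 1) choose (2 * k)) * ((4 * k ^ 2 + 2 * k) choose k)"
proof -
  define n where "n = 4 * k + 1"
  have n: "4 \<le> n" "n div 2 = 2 * k" "n - n div 2 = 2 * k + 1" using assms by (auto simp: n_def)
  have "card (sm n 2) = 2 * (card (sm n 2) - max_cut n + k)"
  proof -
    have "card (sm n 2) = 8 * (k * k) + 2 * k"
      unfolding card_sm choose_two n_def by (simp add: algebra_simps)
    moreover have "max_cut n = 4 * (k * k) + 2 * k" using n(2,3) by (simp add: max_cut_def algebra_simps)
    ultimately show ?thesis by simp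
  qed
  moreover have "B \<in> halves n \<Longrightarrow> {1..n} - B \<notin> halves n" for B
    using n card_compl_half[of B n] by (auto simp: halves_def)
  ultimately have "card (U_generators n) = card (halves n) * (max_cut n choose k)"
    using assms n by (intro card_U_generators) auto
  moreover have "max_cut n = 4 * k ^ 2 + 2 * k" using n(2,3) by (simp add: max_cut_def power2_eq_square algebra_simps)
  ultimately show ?thesis
    using bij_betw_same_card[OF bij_betw_gens_U[OF n(1)]] card_halves[of n] n(2) by (simp add: n_def)
qed

lemma even_card_sm2_if_U_generators: "E \<in> U_generators n \<Longrightarrow> even (card (sm n 2))"
proof -
  assume "E \<in> U_generators n"
  then have E: "E \<subseteq> sm n 2" "card E = card (sm n 2 - E)" by (simp_all add: U_generators_def)
  then have "card (sm n 2 - E) = card (sm n 2) - card E" "card E \<le> card (sm n 2)"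
    by (simp_all add: card_Diff_subset card_mono finite_subset[OF _ finite_sm] finite_sm)
  with E(2) show ?thesis by presburger
qed

lemma odd_choose_2: "n mod 4 = 2 \<or> n mod 4 = 3 \<Longrightarrow> odd (n choose 2)"
proof -
  assume "n mod 4 = 2 \<or> n mod 4 = 3"
  then obtain j where "n = 4 * j + 2 \<or> n = 4 * j + 3" by (metis div_mod_decomp mult.commute)
  then have "n * (n - 1) = 2 * (2 * (4 * j * j + 3 * j) + 1) \<or> n * (n - 1) = 2 * (2 * (4 * j * j + 5 * j + 1) + 1)"
    by (auto simp: algebra_simps)
  then show "odd (n choose 2)" by (auto simp: choose_two)
qed

theorem proposition4p1:
  fixes n k :: nat
  assumes "n \<ge> 4" and "k > 0"
  shows "(n = 4 * k \<longrightarrow>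
            real (card (U n)) = 1 / 2 * real ((4 * k) choose (2 * k)) * real ((4 * k ^ 2) choose k))
       \<and> (n = 4 * k + 1 \<longrightarrow>
            card (U n) = ((4 * k + 1) choose (2 * k)) * ((4 * k ^ 2 + 2 * k) choose k))
       \<and> ((\<nexists>j. n = 4 * j \<or> n = 4 * j + 1) \<longrightarrow> card (U n) = 0)"
proof (intro conjI impI)
  assume "n = 4 * k"
  then have "2 * real (card (U n)) = real ((4 * k) choose (2 * k)) * real ((4 * k ^ 2) choose k)"
    using card_U_mult_4[OF \<open>k > 0\<close>] by (metis of_nat_mult of_nat_numeral)
  then show "real (card (U n)) = 1 / 2 * real ((4 * k) choose (2 * k)) * real ((4 * k ^ 2) choose k)"
    by simp
next
  assume "n = 4 * k + 1"
  then show "card (U n) = ((4 * k + 1) choose (2 * k)) * ((4 * k ^ 2 + 2 * k) choose k)"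
    using card_U_mult_4_plus_1[OF \<open>k > 0\<close>] by simp
next
  assume "\<nexists>j. n = 4 * j \<or> n = 4 * j + 1"
  then have "n mod 4 = 2 \<or> n mod 4 = 3" by presburger
  then have "U_generators n = {}"
    using odd_choose_2 even_card_sm2_if_U_generators by (metis card_sm equals0I)
  then show "card (U n) = 0" using bij_betw_same_card[OF bij_betw_gens_U[OF \<open>n \<ge> 4\<close>]] by simp
qed

end
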